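(* Let $m,n,k$ be positive integers with $(m,k-1)=1$ and $n=\mathrm{ind}_m(k)$, let $G=G(m,n,k)=\langle a,b;\ a^m=1,\ b^n=1,\ b^{-1}ab=a^k\rangle$, and let $x_1,x_2,y_1,y_2\in\mathbb{Z}_m$. Then $C(x_1,y_1)\cap C(x_2,y_2)\neq\varnothing$ if and only if $x_1\equiv x_2\pmod m$.
   Context: $\mathrm{ind}_m(k)$ is the least positive integer $d$ with $k^d\equiv1\pmod m$; $k_t=k^t-1\pmod m$. Elements of $G$ are written uniquely as $a^ib^j$, $i\in\mathbb{Z}_m$, $j\in\mathbb{Z}_n$. For $x,y\in\mathbb{Z}_m$, $\mu(x,y):G\to G$ is $(a^ib^j)\mu(x,y)=a^{xik^j-yk_j}$, and the container is $C(x,y)=\{\mu(x,yz): z\in\mathbb{Z}_m\}$. *)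

theory Defs
  imports "HOL-Number_Theory.Number_Theory"
begin

text \<open>Elements of G(m,n,k) are written uniquely as a^i b^j with i in Z_m, j in Z_n;
  we represent a^i b^j by the normal-form pair (i,j), 0 <= i < m, 0 <= j < n.\<close>

definition Gel :: "nat \<Rightarrow> nat \<Rightarrow> (nat \<times> nat) set" where
  "Gel m n = {0..<m} \<times> {0..<n}"

definition kt :: "nat \<Rightarrow> nat \<Rightarrow> nat \<Rightarrow> int" where
  "kt m k t = (int k ^ t - 1) mod int m"

definition mu :: "nat \<Rightarrow> nat \<Rightarrow> nat \<Rightarrow> int \<Rightarrow> int \<Rightarrow> (nat \<times> nat) \<Rightarrow> (nat \<times> nat)" where
  "mu m n k x y = restrict (\<lambda>(i, j). (nat ((x * int i * int k ^ j - y * kt m k j) mod int m), 0)) (Gel m n)"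

definition container :: "nat \<Rightarrow> nat \<Rightarrow> nat \<Rightarrow> int \<Rightarrow> int \<Rightarrow> ((nat \<times> nat) \<Rightarrow> (nat \<times> nat)) set" where
  "container m n k x y = {mu m n k x (y * z) | z. z \<in> {0..<int m}}"

end

theory Submission
  imports Defs
begin

text \<open>Evaluating \<open>\<mu>(x, y)\<close> at the generator \<open>a\<close> gives \<open>a\<^sup>x\<close>, whatever \<open>y\<close> is, so a common
  element of two containers forces \<open>x\<^sub>1 \<equiv> x\<^sub>2\<close>. Conversely \<open>\<mu>(x, 0)\<close> (take \<open>z = 0\<close>) lies in
  every container \<open>C(x, y)\<close> and depends only on \<open>x\<close> modulo \<open>m\<close>.\<close>

lemma mu_at_generator:
  assumes "1 < m" "0 < n"
  shows "mu m n k x y (1, 0) = (nat (x mod int m), 0)"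
  using assms by (simp add: mu_def Gel_def kt_def)

lemma mu_eq_imp_cong:
  assumes "0 < m" "0 < n" "mu m n k x1 y1 = mu m n k x2 y2"
  shows "[x1 = x2] (mod int m)"
proof (cases "m = 1")
  case True
  then show ?thesis by (simp add: cong_def)
next
  case False
  with assms(1) have "1 < m" by simp
  with assms(2,3) have "(nat (x1 mod int m), 0::nat) = (nat (x2 mod int m), 0)"
    by (metis mu_at_generator)
  with \<open>0 < m\<close> show ?thesis
    by (simp add: cong_def nat_eq_iff)
qed

lemma mu_zero_cong:
  assumes "[x1 = x2] (mod int m)"
  shows "mu m n k x1 0 = mu m n k x2 0"
  using assms unfolding mu_def cong_def
  by (intro restrict_ext) (auto simp: mod_mult_left_eq[of x1, symmetric]
      mod_mult_left_eq[of x2, symmetric] mult.assoc)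

lemma mu_zero_mem_container:
  assumes "0 < m"
  shows "mu m n k x 0 \<in> container m n k x y"
  unfolding container_def using assms by force

theorem lemma3p4:
  fixes m n k :: nat and x1 x2 y1 y2 :: int
  assumes "m > 0" "n > 0" "k > 0"
    and "gcd (int m) (int k - 1) = 1"
    and "n = ord m k"
    and "x1 \<in> {0..<int m}" "x2 \<in> {0..<int m}" "y1 \<in> {0..<int m}" "y2 \<in> {0..<int m}"
  shows "container m n k x1 y1 \<inter> container m n k x2 y2 \<noteq> {} \<longleftrightarrow> [x1 = x2] (mod int m)"
proof
  assume "container m n k x1 y1 \<inter> container m n k x2 y2 \<noteq> {}"
  then obtain z1 z2 where "mu m n k x1 (y1 * z1) = mu m n k x2 (y2 * z2)"
    unfolding container_def by blast
  with assms(1,2) show "[x1 = x2] (mod int m)"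
    by (rule mu_eq_imp_cong)
next
  assume "[x1 = x2] (mod int m)"
  then have "mu m n k x1 0 = mu m n k x2 0"
    by (rule mu_zero_cong)
  then have "mu m n k x1 0 \<in> container m n k x1 y1 \<inter> container m n k x2 y2"
    using mu_zero_mem_container[OF assms(1), of n k x1 y1]
      mu_zero_mem_container[OF assms(1), of n k x2 y2] by simp
  then show "container m n k x1 y1 \<inter> container m n k x2 y2 \<noteq> {}"
    by blast
qed

end
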